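(* Let $\Lambda=[\lambda_{\min},\lambda_{\max}]\subset[0,\infty)$, $\beta\ge0$, let $\tilde\nu(\lambda,dx)$ be a probability kernel on $(0,\infty)$ with $s_0>0$ such that $\sup_{\lambda\in\Lambda}\int_0^\infty e^{sx}\tilde\nu(\lambda,dx)<\infty$ for $s\in[0,s_0)$, and let $\eta\in\mathbb C$ with $\Re(\eta)=\delta<s_0$. Let $F\in C^2(\Lambda)$ and let $\Pi_{\Delta\lambda}F$ be its PCHIP interpolant (interpolation order $p=2$) or piecewise-linear interpolant ($p=1$) on a grid of maximal step $h$. With $N_{\exp}[F](\lambda)=\lambda\int_0^\infty(e^{\eta x}F(\lambda+\beta x)-F(\lambda))\tilde\nu(\lambda,dx)$ (clamped extension outside $\Lambda$), $$\|N_{\exp}[\Pi_{\Delta\lambda}F]-N_{\exp}[F]\|_{\infty,\Lambda}\le\lambda_{\max}\big(C^*_\delta(\Lambda)+1\big)\|\Pi_{\Delta\lambda}F-F\|_{\infty,\Lambda}=\mathcal O(h^p),$$ uniformly on $\Lambda$, where $C^*_\delta(\Lambda)=\sup_{\lambda\in\Lambda}\int_0^\infty e^{\delta x}\tilde\nu(\lambda,dx)<\infty$.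
   Context: Clamped extension: a function on $\Lambda$ is extended to $[0,\infty)$ by the value at the nearest endpoint of $\Lambda$. PCHIP is the piecewise cubic Hermite interpolant with Fritsch–Carlson slopes (interior slope $m_j=\frac{w_1+w_2}{w_1/d_{j-1}+w_2/d_j}$, $w_1=2h_j+h_{j-1}$, $w_2=h_j+2h_{j-1}$, when consecutive secant slopes $d_{j-1},d_j$ satisfy $d_{j-1}d_j>0$, and $m_j=0$ otherwise). *)

theory Defs
  imports "HOL-Analysis.Analysis" "HOL-Probability.Probability"
begin

definition C2_on :: "real set \<Rightarrow> (real \<Rightarrow> real) \<Rightarrow> bool" where
  "C2_on S F \<longleftrightarrow> (\<exists>F' F''. (\<forall>x\<in>S. (F has_real_derivative F' x) (at x within S)
       \<and> (F' has_real_derivative F'' x) (at x within S)) \<and> continuous_on S F'')"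

definition clamp_ext :: "real \<Rightarrow> real \<Rightarrow> (real \<Rightarrow> real) \<Rightarrow> real \<Rightarrow> real" where
  "clamp_ext a b F x = F (max a (min b x))"

definition Nexp :: "real \<Rightarrow> real \<Rightarrow> real \<Rightarrow> complex \<Rightarrow> (real \<Rightarrow> real measure)
                    \<Rightarrow> (real \<Rightarrow> real) \<Rightarrow> real \<Rightarrow> complex" where
  "Nexp a b \<beta> \<eta> \<nu> F l = complex_of_real l *
     (LINT x|\<nu> l. exp (\<eta> * complex_of_real x) * complex_of_real (clamp_ext a b F (l + \<beta> * x))
                 - complex_of_real (clamp_ext a b F l))"

definition expmom :: "real set \<Rightarrow> (real \<Rightarrow> real measure) \<Rightarrow> real \<Rightarrow> ennreal" where
  "expmom L \<nu> s = (SUP l\<in>L. \<integral>\<^sup>+ x. ennreal (exp (s * x)) \<partial>\<nu> l)"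

definition Cstar :: "real set \<Rightarrow> (real \<Rightarrow> real measure) \<Rightarrow> real \<Rightarrow> real" where
  "Cstar L \<nu> \<delta> = enn2real (expmom L \<nu> \<delta>)"

definition supnorm_on :: "real set \<Rightarrow> (real \<Rightarrow> real) \<Rightarrow> real" where
  "supnorm_on S G = (SUP x\<in>S. \<bar>G x\<bar>)"

definition is_grid :: "real \<Rightarrow> real \<Rightarrow> nat \<Rightarrow> (nat \<Rightarrow> real) \<Rightarrow> bool" where
  "is_grid a b n xs \<longleftrightarrow> n \<ge> 1 \<and> xs 0 = a \<and> xs n = b \<and> (\<forall>j<n. xs j < xs (Suc j))"

definition step :: "(nat \<Rightarrow> real) \<Rightarrow> nat \<Rightarrow> real" where
  "step xs j = xs (Suc j) - xs j"

definition maxstep :: "nat \<Rightarrow> (nat \<Rightarrow> real) \<Rightarrow> real" where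
  "maxstep n xs = Max (step xs ` {..<n})"

definition cell :: "nat \<Rightarrow> (nat \<Rightarrow> real) \<Rightarrow> real \<Rightarrow> nat" where
  "cell n xs x = (GREATEST j. j < n \<and> xs j \<le> x)"

definition secant :: "(nat \<Rightarrow> real) \<Rightarrow> (real \<Rightarrow> real) \<Rightarrow> nat \<Rightarrow> real" where
  "secant xs F j = (F (xs (Suc j)) - F (xs j)) / step xs j"

definition pl_interp :: "nat \<Rightarrow> (nat \<Rightarrow> real) \<Rightarrow> (real \<Rightarrow> real) \<Rightarrow> real \<Rightarrow> real" where
  "pl_interp n xs F x = (let j = cell n xs x in F (xs j) + (x - xs j) * secant xs F j)"

text \<open>Endpoint slope (shape-preserving three-point formula, as in SciPy's PchipInterpolator).\<close>
definition pchip_edge :: "real \<Rightarrow> real \<Rightarrow> real \<Rightarrow> real \<Rightarrow> real" where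
  "pchip_edge h0 h1 d0 d1 =
     (let m = ((2 * h0 + h1) * d0 - h0 * d1) / (h0 + h1) in
      if sgn m \<noteq> sgn d0 then 0
      else if sgn d0 \<noteq> sgn d1 \<and> \<bar>m\<bar> > 3 * \<bar>d0\<bar> then 3 * d0
      else m)"

text \<open>Fritsch--Carlson (Fritsch--Butland weighted harmonic mean) PCHIP slopes.\<close>
definition pchip_slope :: "nat \<Rightarrow> (nat \<Rightarrow> real) \<Rightarrow> (real \<Rightarrow> real) \<Rightarrow> nat \<Rightarrow> real" where
  "pchip_slope n xs F j =
     (let d = secant xs F; hh = step xs in
      if n = 1 then d 0
      else if j = 0 then pchip_edge (hh 0) (hh 1) (d 0) (d 1)
      else if j = n then pchip_edge (hh (n - 1)) (hh (n - 2)) (d (n - 1)) (d (n - 2))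
      else if d (j - 1) * d j > 0 then
        (let w1 = 2 * hh j + hh (j - 1); w2 = hh j + 2 * hh (j - 1) in
         (w1 + w2) / (w1 / d (j - 1) + w2 / d j))
      else 0)"

definition pchip_interp :: "nat \<Rightarrow> (nat \<Rightarrow> real) \<Rightarrow> (real \<Rightarrow> real) \<Rightarrow> real \<Rightarrow> real" where
  "pchip_interp n xs F x =
     (let j = cell n xs x; hj = step xs j; t = (x - xs j) / hj;
          m0 = pchip_slope n xs F j; m1 = pchip_slope n xs F (Suc j) in
      F (xs j) * (2 * t^3 - 3 * t^2 + 1) + hj * m0 * (t^3 - 2 * t^2 + t)
      + F (xs (Suc j)) * (- 2 * t^3 + 3 * t^2) + hj * m1 * (t^3 - t^2))"

definition interp :: "nat \<Rightarrow> nat \<Rightarrow> (nat \<Rightarrow> real) \<Rightarrow> (real \<Rightarrow> real) \<Rightarrow> real \<Rightarrow> real" where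
  "interp p n xs F = (if p = 1 then pl_interp n xs F else pchip_interp n xs F)"

end

theory Submission
  imports Defs
begin

text \<open>
  N_exp is affine in F, so at l the difference of the two operators is
  l (\<integral> e^(\<eta> x) (\<Pi>F - F)(l + \<beta> x) \<nu>(l, dx) - (\<Pi>F - F)(l)), both arguments clamped into \<Lambda>.
  As |e^(\<eta> x)| = e^(\<delta> x), this is at most l_max (C*_\<delta> + 1) times the sup norm of \<Pi>F - F
  on \<Lambda>. C*_\<delta> is finite because e^(\<delta> x) \<le> e^(s x) on the support (0, \<infinity>) of the kernel,
  where s = max 0 \<delta> < s0.

  The rate is the interpolation error. Piecewise-linear interpolation is O(h) because F is
  Lipschitz. For PCHIP, every secant is within O(h) of F' at both ends of its cell, and a
  Fritsch-Carlson slope is a weighted harmonic mean of two neighbouring secants (so it lies between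
  them), or 0 when they differ in sign (then |F'| itself is O(h) at the node), or the three-point
  end formula; hence all nodal slopes are O(h)-accurate. A cubic Hermite interpolant with
  O(h)-accurate slopes is O(h^2)-accurate, because its basis reproduces linear functions.
\<close>

section \<open>Functions of class \<open>C\<^sup>2\<close> on an interval\<close>

locale bounded_C2 =
  fixes a b :: real and F F' F'' :: "real \<Rightarrow> real" and M1 M2 :: real
  assumes F_deriv: "\<And>x. x \<in> {a..b} \<Longrightarrow> (F has_real_derivative F' x) (at x within {a..b})"
    and F'_deriv: "\<And>x. x \<in> {a..b} \<Longrightarrow> (F' has_real_derivative F'' x) (at x within {a..b})"
    and F'_bound: "\<And>x. x \<in> {a..b} \<Longrightarrow> \<bar>F' x\<bar> \<le> M1"
    and F''_bound: "\<And>x. x \<in> {a..b} \<Longrightarrow> \<bar>F'' x\<bar> \<le> M2"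
    and M1_nonneg: "0 \<le> M1" and M2_nonneg: "0 \<le> M2"
begin

lemma F_lipschitz: "x \<in> {a..b} \<Longrightarrow> y \<in> {a..b} \<Longrightarrow> \<bar>F x - F y\<bar> \<le> M1 * \<bar>x - y\<bar>"
  using field_differentiable_bound[of "{a..b}" F F' M1 x y] F_deriv F'_bound by auto

lemma F'_lipschitz: "x \<in> {a..b} \<Longrightarrow> y \<in> {a..b} \<Longrightarrow> \<bar>F' x - F' y\<bar> \<le> M2 * \<bar>x - y\<bar>"
  using field_differentiable_bound[of "{a..b}" F' F'' M2 x y] F'_deriv F''_bound by auto

lemma taylor_remainder_le:
  assumes x: "x \<in> {a..b}" and y: "y \<in> {a..b}"
  shows "\<bar>F y - F x - (y - x) * F' x\<bar> \<le> M2 * (y - x)\<^sup>2"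
proof -
  define S where "S = closed_segment x y"
  have S: "S \<subseteq> {a..b}"
    using x y by (simp add: S_def closed_segment_subset)
  define R where "R z = F z - z * F' x" for z
  have "(R has_real_derivative F' z - F' x) (at z within S)" if "z \<in> S" for z
    using DERIV_subset[OF F_deriv S] that S unfolding R_def by (auto intro!: derivative_eq_intros)
  moreover have "\<bar>F' z - F' x\<bar> \<le> M2 * \<bar>y - x\<bar>" if "z \<in> S" for z
  proof -
    have "\<bar>F' z - F' x\<bar> \<le> M2 * \<bar>z - x\<bar>" using F'_lipschitz that S x by auto
    also have "\<dots> \<le> M2 * \<bar>y - x\<bar>"
      using that M2_nonneg by (intro mult_left_mono) (auto simp: S_def closed_segment_eq_real_ivl split: if_splits)
    finally show ?thesis .
  qed
  ultimately have "\<bar>R y - R x\<bar> \<le> M2 * \<bar>y - x\<bar> * \<bar>y - x\<bar>"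
    using field_differentiable_bound[of S R "\<lambda>z. F' z - F' x" "M2 * \<bar>y - x\<bar>" y x]
    by (auto simp: S_def)
  moreover have "R y - R x = F y - F x - (y - x) * F' x" by (simp add: R_def algebra_simps)
  ultimately show ?thesis by (simp add: power2_eq_square mult.assoc)
qed

end

lemma C2_on_imp_bounded_C2:
  assumes F: "C2_on {a..b} F"
  obtains F' F'' M1 M2 where "bounded_C2 a b F F' F'' M1 M2"
proof -
  obtain F' F'' where
    deriv: "\<forall>x\<in>{a..b}. (F has_real_derivative F' x) (at x within {a..b})
                     \<and> (F' has_real_derivative F'' x) (at x within {a..b})"
    and "continuous_on {a..b} F''"
    using F unfolding C2_on_def by blast
  moreover have "continuous_on {a..b} F'"
    using deriv by (intro DERIV_continuous_on) blast
  ultimately obtain M1 M2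
    where "M1 \<ge> 0" "\<And>x. x \<in> {a..b} \<Longrightarrow> \<bar>F' x\<bar> \<le> M1"
      and "M2 \<ge> 0" "\<And>x. x \<in> {a..b} \<Longrightarrow> \<bar>F'' x\<bar> \<le> M2"
    using continuous_on_compact_bound[OF compact_Icc] by (metis real_norm_def)
  with deriv have "bounded_C2 a b F F' F'' M1 M2" by unfold_locales auto
  then show thesis by (rule that)
qed


section \<open>Grids and cells\<close>

lemma grid_mono:
  assumes grid: "is_grid a b n xs" and "j \<le> k" "k \<le> n"
  shows "xs j \<le> xs k"
  using assms(2,3)
proof (induction k)
  case (Suc k)
  show ?case
  proof (cases "j = Suc k")
    case False
    then have "xs j \<le> xs k" using Suc by auto
    also have "xs k \<le> xs (Suc k)" using grid Suc.prems unfolding is_grid_def by (simp add: less_imp_le)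
    finally show ?thesis .
  qed simp
qed simp

lemma grid_node_in_Icc:
  assumes "is_grid a b n xs" "j \<le> n"
  shows "xs j \<in> {a..b}"
  using grid_mono[OF assms(1), of 0 j] grid_mono[OF assms(1), of j n] assms
  unfolding is_grid_def by auto

lemma step_pos: "is_grid a b n xs \<Longrightarrow> j < n \<Longrightarrow> 0 < step xs j"
  unfolding is_grid_def step_def by auto

lemma step_le_maxstep: "j < n \<Longrightarrow> step xs j \<le> maxstep n xs"
  unfolding maxstep_def by (intro Max_ge) auto

lemma maxstep_pos: "is_grid a b n xs \<Longrightarrow> 0 < maxstep n xs"
  using step_pos[of a b n xs 0] step_le_maxstep[of 0 n xs] unfolding is_grid_def by auto

lemma cell_eq_iff:
  assumes grid: "is_grid a b n xs" and x: "a \<le> x"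
  shows "cell n xs x = c \<longleftrightarrow> c < n \<and> xs c \<le> x \<and> (Suc c = n \<or> x < xs (Suc c))"
proof -
  let ?P = "\<lambda>j. j < n \<and> xs j \<le> x"
  have "?P 0" using grid x unfolding is_grid_def by auto
  then have "?P (cell n xs x)"
    unfolding cell_def by (rule GreatestI_nat[of ?P 0 n]) auto
  moreover have "\<And>j. ?P j \<Longrightarrow> j \<le> cell n xs x"
    unfolding cell_def by (rule Greatest_le_nat[of ?P _ n]) auto
  ultimately have cell: "?P (cell n xs x)" "\<And>j. ?P j \<Longrightarrow> j \<le> cell n xs x" .
  show ?thesis
  proof
    assume c: "cell n xs x = c"
    have "x < xs (Suc c)" if "Suc c < n"
      using cell(2)[of "Suc c"] that c by force
    then show "c < n \<and> xs c \<le> x \<and> (Suc c = n \<or> x < xs (Suc c))"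
      using cell(1) c Suc_lessI by blast
  next
    assume c: "c < n \<and> xs c \<le> x \<and> (Suc c = n \<or> x < xs (Suc c))"
    have "j \<le> c" if "?P j" for j
    proof (rule ccontr)
      assume "\<not> j \<le> c"
      then show False using c that grid_mono[OF grid, of "Suc c" j] by auto
    qed
    then show "cell n xs x = c"
      using c cell by (simp add: le_antisym)
  qed
qed

lemma cell_bounds:
  assumes grid: "is_grid a b n xs" and x: "x \<in> {a..b}"
  shows "cell n xs x < n" "xs (cell n xs x) \<le> x" "x \<le> xs (Suc (cell n xs x))"
  using cell_eq_iff[OF grid, of x "cell n xs x"] x grid unfolding is_grid_def by auto

text \<open>\<open>GREATEST j. False\<close> is an unspecified constant; measurability only needs that
  \<^const>\<open>cell\<close> is constant left of the grid.\<close>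
lemma cell_below_grid:
  assumes grid: "is_grid a b n xs" and x: "x < a"
  shows "cell n xs x = (GREATEST j::nat. False)"
proof -
  have "xs j > x" if "j < n" for j
    using grid_node_in_Icc[OF grid, of j] that x by auto
  then have "(\<lambda>j. j < n \<and> xs j \<le> x) = (\<lambda>j. False)"
    by (auto simp: fun_eq_iff not_le[symmetric])
  then show ?thesis unfolding cell_def by simp
qed

lemma cell_measurable: "is_grid a b n xs \<Longrightarrow> cell n xs \<in> borel \<rightarrow>\<^sub>M count_space UNIV"
proof (subst measurable_count_space_eq2_countable, safe)
  fix c :: nat
  assume grid: "is_grid a b n xs"
  have "cell n xs -` {c} = {x. x < a \<and> (GREATEST j::nat. False) = c} \<union>
      {x. a \<le> x \<and> c < n \<and> xs c \<le> x \<and> (Suc c = n \<or> x < xs (Suc c))}"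
    using cell_eq_iff[OF grid] cell_below_grid[OF grid] by (auto simp: not_le) (metis not_le)+
  also have "\<dots> \<in> sets borel" by measurable
  finally show "cell n xs -` {c} \<inter> space borel \<in> sets borel" by simp
qed auto

lemma interp_measurable:
  assumes grid: "is_grid a b n xs"
  shows "interp p n xs F \<in> borel_measurable borel"
proof -
  note cell = cell_measurable[OF grid]
  have "pl_interp n xs F = (\<lambda>x. (\<lambda>j x. F (xs j) + (x - xs j) * secant xs F j) (cell n xs x) x)"
    by (simp add: fun_eq_iff pl_interp_def Let_def)
  also have "\<dots> \<in> borel_measurable borel"
    by (rule measurable_compose_countable'[OF _ cell]) measurable
  finally have pl: "pl_interp n xs F \<in> borel_measurable borel" .
  have "pchip_interp n xs F = (\<lambda>x. (\<lambda>j x.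
      F (xs j) * (2 * ((x - xs j) / step xs j)^3 - 3 * ((x - xs j) / step xs j)^2 + 1)
      + step xs j * pchip_slope n xs F j
        * (((x - xs j) / step xs j)^3 - 2 * ((x - xs j) / step xs j)^2 + (x - xs j) / step xs j)
      + F (xs (Suc j)) * (- 2 * ((x - xs j) / step xs j)^3 + 3 * ((x - xs j) / step xs j)^2)
      + step xs j * pchip_slope n xs F (Suc j)
        * (((x - xs j) / step xs j)^3 - ((x - xs j) / step xs j)^2))
      (cell n xs x) x)"
    by (simp add: fun_eq_iff pchip_interp_def Let_def)
  also have "\<dots> \<in> borel_measurable borel"
    by (rule measurable_compose_countable'[OF _ cell]) measurable
  finally have "pchip_interp n xs F \<in> borel_measurable borel" .
  with pl show ?thesis by (simp add: interp_def)
qed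

section \<open>Interpolation error\<close>

lemma abs_le_supnorm_on:
  "bdd_above ((\<lambda>x. \<bar>G x\<bar>) ` S) \<Longrightarrow> x \<in> S \<Longrightarrow> \<bar>G x\<bar> \<le> supnorm_on S G"
  unfolding supnorm_on_def by (rule cSUP_upper)

lemma supnorm_on_le:
  "S \<noteq> {} \<Longrightarrow> (\<And>x. x \<in> S \<Longrightarrow> \<bar>G x\<bar> \<le> B) \<Longrightarrow> supnorm_on S G \<le> B"
  unfolding supnorm_on_def by (rule cSUP_least)

lemma hermite_cubic_error:
  fixes t h H A B y0 y1 y g m0 m1 :: real
  assumes t: "0 \<le> t" "t \<le> 1" and h: "0 \<le> h" "h \<le> H" and "0 \<le> A" "0 \<le> B"
    and m0: "\<bar>m0 - g\<bar> \<le> A * H" and m1: "\<bar>m1 - g\<bar> \<le> A * H"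
    and y1: "\<bar>y1 - y0 - h * g\<bar> \<le> B * H\<^sup>2" and y: "\<bar>y - y0 - t * h * g\<bar> \<le> B * H\<^sup>2"
  shows "\<bar>y0 * (2 * t^3 - 3 * t^2 + 1) + h * m0 * (t^3 - 2 * t^2 + t)
      + y1 * (- 2 * t^3 + 3 * t^2) + h * m1 * (t^3 - t^2) - y\<bar> \<le> (2 * A + 2 * B) * H\<^sup>2"
proof -
  define H10 where "H10 = t * (1 - t)\<^sup>2"
  define H01 where "H01 = t\<^sup>2 * (3 - 2 * t)"
  define H11 where "H11 = t\<^sup>2 * (1 - t)"
  \<comment> \<open>The Hermite basis reproduces linear functions: only deviations from the tangent at y0 remain.\<close>
  have eq: "y0 * (2 * t^3 - 3 * t^2 + 1) + h * m0 * (t^3 - 2 * t^2 + t)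
      + y1 * (- 2 * t^3 + 3 * t^2) + h * m1 * (t^3 - t^2) - y
      = h * (m0 - g) * H10 + (y1 - y0 - h * g) * H01 - h * (m1 - g) * H11 - (y - y0 - t * h * g)"
    unfolding H10_def H01_def H11_def by (simp add: algebra_simps power2_eq_square power3_eq_cube)
  have H10: "\<bar>H10\<bar> \<le> 1" and H11: "\<bar>H11\<bar> \<le> 1"
    unfolding H10_def H11_def using t by (simp_all add: abs_mult mult_le_one power_le_one)
  have H01: "\<bar>H01\<bar> \<le> 1"
  proof -
    have "H01 = 1 - (1 - t)\<^sup>2 * (1 + 2 * t)"
      unfolding H01_def by (simp add: algebra_simps power2_eq_square)
    moreover have "0 \<le> H01" unfolding H01_def using t by simp
    ultimately show ?thesis using t by simp
  qed
  have "\<bar>h * (m0 - g) * H10\<bar> \<le> H * (A * H) * 1"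
    unfolding abs_mult using h m0 H10 by (intro mult_mono) auto
  moreover have "\<bar>h * (m1 - g) * H11\<bar> \<le> H * (A * H) * 1"
    unfolding abs_mult using h m1 H11 by (intro mult_mono) auto
  moreover have "\<bar>(y1 - y0 - h * g) * H01\<bar> \<le> (B * H\<^sup>2) * 1"
    unfolding abs_mult using y1 H01 by (intro mult_mono) auto
  ultimately show ?thesis unfolding eq using y by (simp add: power2_eq_square algebra_simps)
qed

lemma pchip_edge_error:
  assumes h: "0 < h0" "0 < h1" and d0: "\<bar>d0 - g\<bar> \<le> E" and d1: "\<bar>d1 - g\<bar> \<le> E"
  shows "\<bar>pchip_edge h0 h1 d0 d1 - g\<bar> \<le> 5 * E"
proof -
  define m where "m = ((2 * h0 + h1) * d0 - h0 * d1) / (h0 + h1)"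
  have "m - d0 = h0 / (h0 + h1) * (d0 - d1)"
    using h by (simp add: m_def field_simps)
  moreover have "\<bar>h0 / (h0 + h1)\<bar> \<le> 1" using h by simp
  ultimately have "\<bar>m - d0\<bar> \<le> \<bar>d0 - d1\<bar>"
    by (metis abs_ge_zero abs_mult mult_left_le_one_le)
  then have m: "\<bar>m - d0\<bar> \<le> 2 * E" using d0 d1 by linarith
  consider "sgn m \<noteq> sgn d0" | "sgn m = sgn d0" "sgn d0 \<noteq> sgn d1" "\<bar>m\<bar> > 3 * \<bar>d0\<bar>"
    | "pchip_edge h0 h1 d0 d1 = m"
    unfolding pchip_edge_def m_def[symmetric] by (metis (full_types))
  then show ?thesis
  proof cases
    case 1
    then have "\<bar>d0\<bar> \<le> \<bar>m - d0\<bar>" by (auto simp: sgn_if split: if_splits)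
    with 1 show ?thesis
      using m d0 unfolding pchip_edge_def m_def[symmetric] by auto
  next
    case 2
    then have "2 * \<bar>d0\<bar> \<le> 2 * E" using m by linarith
    with 2 show ?thesis
      using d0 unfolding pchip_edge_def m_def[symmetric] by auto
  next
    case 3
    then show ?thesis using m d0 by linarith
  qed
qed

lemma weighted_harmonic_mean_between_pos:
  fixes w1 w2 d1 d2 :: real
  assumes "0 < w1" "0 < w2" "0 < d1" "0 < d2"
  shows "min d1 d2 \<le> (w1 + w2) / (w1 / d1 + w2 / d2)"
    and "(w1 + w2) / (w1 / d1 + w2 / d2) \<le> max d1 d2"
proof -
  have pos: "0 < w1 / d1 + w2 / d2" using assms by (intro add_pos_pos divide_pos_pos)
  have w: "d1 * (w1 / d1) = w1" "d2 * (w2 / d2) = w2" using assms by simp_all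
  have "min d1 d2 * (w1 / d1) \<le> d1 * (w1 / d1)" "min d1 d2 * (w2 / d2) \<le> d2 * (w2 / d2)"
    using assms by (intro mult_right_mono; simp)+
  then show "min d1 d2 \<le> (w1 + w2) / (w1 / d1 + w2 / d2)"
    using pos w by (simp add: le_divide_eq distrib_left)
  have "d1 * (w1 / d1) \<le> max d1 d2 * (w1 / d1)" "d2 * (w2 / d2) \<le> max d1 d2 * (w2 / d2)"
    using assms by (intro mult_right_mono; simp)+
  then show "(w1 + w2) / (w1 / d1 + w2 / d2) \<le> max d1 d2"
    using pos w by (simp add: divide_le_eq distrib_left)
qed

lemma weighted_harmonic_mean_error:
  fixes w1 w2 d1 d2 :: real
  assumes w: "0 < w1" "0 < w2" and d: "0 < d1 * d2"
    and d1: "\<bar>d1 - g\<bar> \<le> E" and d2: "\<bar>d2 - g\<bar> \<le> E"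
  shows "\<bar>(w1 + w2) / (w1 / d1 + w2 / d2) - g\<bar> \<le> E"
proof -
  let ?m = "(w1 + w2) / (w1 / d1 + w2 / d2)"
  have "min d1 d2 \<le> ?m \<and> ?m \<le> max d1 d2"
  proof (cases "0 < d1")
    case True
    with d have "0 < d2" by (simp add: zero_less_mult_iff)
    with True show ?thesis using weighted_harmonic_mean_between_pos[OF w] by simp
  next
    case False
    with d have "0 < - d1" "0 < - d2" by (auto simp: zero_less_mult_iff)
    have "w1 / - d1 + w2 / - d2 = - (w1 / d1 + w2 / d2)" by simp
    then have "(w1 + w2) / (w1 / - d1 + w2 / - d2) = - ?m"
      by (simp only: divide_minus_right)
    with weighted_harmonic_mean_between_pos[OF w \<open>0 < - d1\<close> \<open>0 < - d2\<close>] show ?thesis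
      by (simp flip: minus_max_eq_min minus_min_eq_max)
  qed
  moreover have "max d1 d2 - g \<le> E" "g - min d1 d2 \<le> E"
    using d1 d2 by (simp_all add: max_def min_def abs_le_iff)
  ultimately show ?thesis by (simp add: abs_le_iff)
qed

lemma abs_le_of_opposite_signs:
  fixes d1 d2 :: real
  assumes "\<not> 0 < d1 * d2" and "\<bar>d1 - g\<bar> \<le> E" and "\<bar>d2 - g\<bar> \<le> E"
  shows "\<bar>g\<bar> \<le> E"
proof -
  have "(d1 \<le> 0 \<and> 0 \<le> d2) \<or> (d2 \<le> 0 \<and> 0 \<le> d1)"
    using assms(1) mult_pos_pos[of d1 d2] mult_neg_neg[of d1 d2] by linarith
  then show ?thesis using assms(2,3) by auto
qed

context bounded_C2
begin

lemma difference_quotient_error: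
  assumes x: "x \<in> {a..b}" and y: "y \<in> {a..b}" and "x \<noteq> y"
  shows "\<bar>(F y - F x) / (y - x) - F' x\<bar> \<le> M2 * \<bar>y - x\<bar>"
proof -
  have "(F y - F x) / (y - x) - F' x = (F y - F x - (y - x) * F' x) / (y - x)"
    using \<open>x \<noteq> y\<close> by (simp add: field_simps)
  also have "\<bar>\<dots>\<bar> \<le> M2 * (y - x)\<^sup>2 / \<bar>y - x\<bar>"
    unfolding abs_divide using taylor_remainder_le[OF x y] by (simp add: divide_right_mono)
  also have "\<dots> = M2 * \<bar>y - x\<bar>"
    using \<open>x \<noteq> y\<close> by (simp add: abs_if power2_eq_square field_simps)
  finally show ?thesis .
qed

lemma secant_error:
  assumes grid: "is_grid a b n xs" and j: "j < n"
  shows "\<bar>secant xs F j - F' (xs j)\<bar> \<le> M2 * maxstep n xs"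
    and "\<bar>secant xs F j - F' (xs (Suc j))\<bar> \<le> M2 * maxstep n xs"
    and "\<bar>secant xs F j\<bar> \<le> M1"
proof -
  have nodes: "xs j \<in> {a..b}" "xs (Suc j) \<in> {a..b}"
    using grid_node_in_Icc[OF grid] j by auto
  have h: "\<bar>xs (Suc j) - xs j\<bar> = step xs j" "step xs j \<noteq> 0"
    using step_pos[OF grid j] by (auto simp: step_def)
  have "M2 * step xs j \<le> M2 * maxstep n xs"
    using step_le_maxstep[OF j] M2_nonneg by (rule mult_left_mono)
  moreover have "secant xs F j = (F (xs j) - F (xs (Suc j))) / (xs j - xs (Suc j))"
    unfolding secant_def step_def by (metis minus_diff_eq minus_divide_divide)
  ultimately show "\<bar>secant xs F j - F' (xs j)\<bar> \<le> M2 * maxstep n xs"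
    and "\<bar>secant xs F j - F' (xs (Suc j))\<bar> \<le> M2 * maxstep n xs"
    using difference_quotient_error[OF nodes(1,2)] difference_quotient_error[OF nodes(2,1)] h
    by (auto simp: secant_def step_def abs_minus_commute)
  show "\<bar>secant xs F j\<bar> \<le> M1"
    using F_lipschitz[OF nodes(2,1)] h step_pos[OF grid j] by (simp add: secant_def abs_divide divide_le_eq)
qed

lemma F'_node_diff:
  assumes grid: "is_grid a b n xs" and j: "j < n"
  shows "\<bar>F' (xs (Suc j)) - F' (xs j)\<bar> \<le> M2 * maxstep n xs"
proof -
  have "\<bar>F' (xs (Suc j)) - F' (xs j)\<bar> \<le> M2 * \<bar>xs (Suc j) - xs j\<bar>"
    using F'_lipschitz grid_node_in_Icc[OF grid] j by simp
  also have "\<dots> \<le> M2 * maxstep n xs"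
    using step_pos[OF grid j] step_le_maxstep[OF j] M2_nonneg
    by (intro mult_left_mono) (auto simp: step_def)
  finally show ?thesis .
qed

lemma pchip_slope_interior_error:
  assumes grid: "is_grid a b n xs" and j: "0 < j" "j < n"
  shows "\<bar>pchip_slope n xs F j - F' (xs j)\<bar> \<le> M2 * maxstep n xs"
proof -
  let ?d = "secant xs F"
  have "\<bar>?d (j - 1) - F' (xs (Suc (j - 1)))\<bar> \<le> M2 * maxstep n xs"
    using j by (intro secant_error(2)[OF grid]) simp
  then have d: "\<bar>?d (j - 1) - F' (xs j)\<bar> \<le> M2 * maxstep n xs" "\<bar>?d j - F' (xs j)\<bar> \<le> M2 * maxstep n xs"
    using secant_error(1)[OF grid j(2)] j by simp_all
  show ?thesis
  proof (cases "0 < ?d (j - 1) * ?d j")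
    case True
    have "0 < step xs (j - 1)" "0 < step xs j"
      using step_pos[OF grid] j by simp_all
    then have "0 < 2 * step xs j + step xs (j - 1)" "0 < step xs j + 2 * step xs (j - 1)"
      by simp_all
    from weighted_harmonic_mean_error[OF this True d] show ?thesis
      using j True by (simp add: pchip_slope_def Let_def)
  next
    case False
    with j show ?thesis
      using abs_le_of_opposite_signs[OF False d] by (simp add: pchip_slope_def Let_def)
  qed
qed

lemma pchip_slope_first_error:
  assumes grid: "is_grid a b n xs" and n: "2 \<le> n"
  shows "\<bar>pchip_slope n xs F 0 - F' (xs 0)\<bar> \<le> 10 * M2 * maxstep n xs"
proof -
  let ?d = "secant xs F" and ?E = "M2 * maxstep n xs"
  have "0 \<le> ?E" using maxstep_pos[OF grid] M2_nonneg by simp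
  then have d0: "\<bar>?d 0 - F' (xs 0)\<bar> \<le> 2 * ?E"
    using secant_error(1)[OF grid, of 0] n by simp
  have d1: "\<bar>?d 1 - F' (xs 0)\<bar> \<le> 2 * ?E"
    using secant_error(1)[OF grid, of 1] F'_node_diff[OF grid, of 0] n by simp
  have "\<bar>pchip_edge (step xs 0) (step xs 1) (?d 0) (?d 1) - F' (xs 0)\<bar> \<le> 5 * (2 * ?E)"
    using step_pos[OF grid, of 0] step_pos[OF grid, of 1] n by (intro pchip_edge_error d0 d1) auto
  then show ?thesis using n by (simp add: pchip_slope_def Let_def)
qed

lemma pchip_slope_last_error:
  assumes grid: "is_grid a b n xs" and n: "2 \<le> n"
  shows "\<bar>pchip_slope n xs F n - F' (xs n)\<bar> \<le> 10 * M2 * maxstep n xs"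
proof -
  let ?d = "secant xs F" and ?E = "M2 * maxstep n xs"
  have idx: "Suc (n - 1) = n" "Suc (n - 2) = n - 1" using n by auto
  have "0 \<le> ?E" using maxstep_pos[OF grid] M2_nonneg by simp
  then have d0: "\<bar>?d (n - 1) - F' (xs n)\<bar> \<le> 2 * ?E"
    using secant_error(2)[OF grid, of "n - 1"] n idx by simp
  have d1: "\<bar>?d (n - 2) - F' (xs n)\<bar> \<le> 2 * ?E"
    using secant_error(2)[OF grid, of "n - 2"] F'_node_diff[OF grid, of "n - 1"] n idx by simp
  have "\<bar>pchip_edge (step xs (n - 1)) (step xs (n - 2)) (?d (n - 1)) (?d (n - 2)) - F' (xs n)\<bar>
      \<le> 5 * (2 * ?E)"
    using step_pos[OF grid, of "n - 1"] step_pos[OF grid, of "n - 2"] n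
    by (intro pchip_edge_error d0 d1) auto
  then show ?thesis using n by (simp add: pchip_slope_def Let_def)
qed

lemma pchip_slope_error:
  assumes grid: "is_grid a b n xs" and j: "j \<le> n"
  shows "\<bar>pchip_slope n xs F j - F' (xs j)\<bar> \<le> 10 * M2 * maxstep n xs"
proof -
  have E: "0 \<le> M2 * maxstep n xs" using maxstep_pos[OF grid] M2_nonneg by simp
  consider "n = 1" | "2 \<le> n" "j = 0" | "2 \<le> n" "j = n" | "0 < j" "j < n"
    using grid j unfolding is_grid_def by linarith
  then show ?thesis
  proof cases
    case 1
    then have "\<bar>secant xs F 0 - F' (xs j)\<bar> \<le> M2 * maxstep n xs"
      using secant_error(1,2)[OF grid, of 0] j by (cases j) auto
    with 1 E show ?thesis by (simp add: pchip_slope_def)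
  next
    case 2
    then show ?thesis using pchip_slope_first_error[OF grid] by simp
  next
    case 3
    then show ?thesis using pchip_slope_last_error[OF grid] by simp
  next
    case 4
    then show ?thesis
      using pchip_slope_interior_error[OF grid 4] E unfolding mult.assoc by linarith
  qed
qed

lemma pl_interp_error:
  assumes grid: "is_grid a b n xs" and x: "x \<in> {a..b}"
  shows "\<bar>pl_interp n xs F x - F x\<bar> \<le> 2 * M1 * maxstep n xs"
proof -
  define j where "j = cell n xs x"
  have j: "j < n" "xs j \<le> x" "x \<le> xs (Suc j)"
    using cell_bounds[OF grid x] by (simp_all add: j_def)
  have dx: "\<bar>x - xs j\<bar> \<le> maxstep n xs"
    using j step_le_maxstep[OF j(1), of xs] by (simp add: step_def)
  have "\<bar>F (xs j) - F x\<bar> \<le> M1 * maxstep n xs"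
    using F_lipschitz[OF grid_node_in_Icc[OF grid] x, of j] j dx M1_nonneg
    by (simp add: abs_minus_commute order_trans[OF _ mult_left_mono])
  moreover have "\<bar>(x - xs j) * secant xs F j\<bar> \<le> maxstep n xs * M1"
    unfolding abs_mult using dx secant_error(3)[OF grid j(1)] by (intro mult_mono) auto
  ultimately show ?thesis
    unfolding pl_interp_def Let_def j_def[symmetric] by (simp add: algebra_simps)
qed

lemma pchip_interp_error:
  assumes grid: "is_grid a b n xs" and x: "x \<in> {a..b}"
  shows "\<bar>pchip_interp n xs F x - F x\<bar> \<le> 24 * M2 * (maxstep n xs)\<^sup>2"
proof -
  define j where "j = cell n xs x"
  define H where "H = maxstep n xs"
  define h where "h = step xs j"
  define t where "t = (x - xs j) / h"
  have j: "j < n" "xs j \<le> x" "x \<le> xs (Suc j)"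
    using cell_bounds[OF grid x] by (simp_all add: j_def)
  have h: "0 < h" "h \<le> H"
    using step_pos[OF grid j(1)] step_le_maxstep[OF j(1)] by (simp_all add: h_def H_def)
  have t: "0 \<le> t" "t \<le> 1" "x - xs j = t * h"
    using j h by (simp_all add: t_def h_def step_def divide_le_eq)
  have nodes: "xs j \<in> {a..b}" "xs (Suc j) \<in> {a..b}"
    using grid_node_in_Icc[OF grid] j by simp_all
  let ?g = "F' (xs j)"
  have m0: "\<bar>pchip_slope n xs F j - ?g\<bar> \<le> (11 * M2) * H"
    using pchip_slope_error[OF grid, of j] j M2_nonneg h by (simp add: H_def)
  have m1: "\<bar>pchip_slope n xs F (Suc j) - ?g\<bar> \<le> (11 * M2) * H"
    using pchip_slope_error[OF grid, of "Suc j"] F'_node_diff[OF grid j(1)] j by (simp add: H_def)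
  have sq: "M2 * r\<^sup>2 \<le> M2 * H\<^sup>2" if "0 \<le> r" "r \<le> H" for r
    using that M2_nonneg by (intro mult_left_mono power_mono)
  have "\<bar>F (xs (Suc j)) - F (xs j) - h * ?g\<bar> \<le> M2 * h\<^sup>2"
    using taylor_remainder_le[OF nodes] by (simp add: h_def step_def)
  then have y1: "\<bar>F (xs (Suc j)) - F (xs j) - h * ?g\<bar> \<le> M2 * H\<^sup>2"
    using sq[of h] h by simp
  have "\<bar>F x - F (xs j) - t * h * ?g\<bar> \<le> M2 * (t * h)\<^sup>2"
    using taylor_remainder_le[OF nodes(1) x] t(3) by simp
  moreover have "t * h \<le> 1 * H" using t h by (intro mult_mono) auto
  ultimately have y: "\<bar>F x - F (xs j) - t * h * ?g\<bar> \<le> M2 * H\<^sup>2"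
    using sq[of "t * h"] t h by simp
  have "\<bar>F (xs j) * (2 * t^3 - 3 * t^2 + 1) + h * pchip_slope n xs F j * (t^3 - 2 * t^2 + t)
      + F (xs (Suc j)) * (- 2 * t^3 + 3 * t^2) + h * pchip_slope n xs F (Suc j) * (t^3 - t^2) - F x\<bar>
      \<le> (2 * (11 * M2) + 2 * M2) * H\<^sup>2"
    using h M2_nonneg by (intro hermite_cubic_error[OF t(1,2) _ _ _ _ m0 m1 y1 y]) simp_all
  then show ?thesis
    unfolding pchip_interp_def Let_def j_def[symmetric] h_def[symmetric] t_def[symmetric] H_def[symmetric]
    by simp
qed

lemma interp_error:
  assumes grid: "is_grid a b n xs" and x: "x \<in> {a..b}" and p: "p \<in> {1, 2}"
  shows "\<bar>interp p n xs F x - F x\<bar> \<le> (2 * M1 + 24 * M2) * maxstep n xs ^ p"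
proof -
  have H: "0 < maxstep n xs" using maxstep_pos[OF grid] .
  show ?thesis
  proof (cases "p = 1")
    case True
    have "0 \<le> M2 * maxstep n xs" using H M2_nonneg by simp
    then show ?thesis using pl_interp_error[OF grid x] True by (simp add: interp_def algebra_simps)
  next
    case False
    then have "p = 2" using p by auto
    have "0 \<le> M1 * (maxstep n xs)\<^sup>2" using H M1_nonneg by simp
    then show ?thesis using pchip_interp_error[OF grid x] \<open>p = 2\<close> by (simp add: interp_def algebra_simps)
  qed
qed

lemma supnorm_interp_error:
  assumes grid: "is_grid a b n xs" and p: "p \<in> {1, 2}"
  shows "bdd_above ((\<lambda>x. \<bar>interp p n xs F x - F x\<bar>) ` {a..b})"
    and "supnorm_on {a..b} (\<lambda>x. interp p n xs F x - F x) \<le> (2 * M1 + 24 * M2) * maxstep n xs ^ p"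
proof -
  have err: "\<And>x. x \<in> {a..b} \<Longrightarrow> \<bar>interp p n xs F x - F x\<bar> \<le> (2 * M1 + 24 * M2) * maxstep n xs ^ p"
    using interp_error[OF grid _ p] .
  then show "bdd_above ((\<lambda>x. \<bar>interp p n xs F x - F x\<bar>) ` {a..b})"
    by (rule bdd_aboveI2)
  show "supnorm_on {a..b} (\<lambda>x. interp p n xs F x - F x) \<le> (2 * M1 + 24 * M2) * maxstep n xs ^ p"
    using grid_node_in_Icc[OF grid, of 0] err by (intro supnorm_on_le) auto
qed

end

section \<open>Stability of the nonlocal operator\<close>

lemma expmom_mono:
  assumes sets: "\<And>l. l \<in> L \<Longrightarrow> sets (\<nu> l) = sets borel"
    and pos: "\<And>l. l \<in> L \<Longrightarrow> emeasure (\<nu> l) {..0} = 0"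
    and "s \<le> t"
  shows "expmom L \<nu> s \<le> expmom L \<nu> t"
  unfolding expmom_def
proof (rule SUP_mono)
  fix l assume l: "l \<in> L"
  have "{..0::real} \<in> null_sets (\<nu> l)"
    using sets[OF l] pos[OF l] by (intro null_setsI) auto
  then have "AE x in \<nu> l. 0 < x" by (rule AE_I') auto
  then have "(\<integral>\<^sup>+x. ennreal (exp (s * x)) \<partial>\<nu> l) \<le> (\<integral>\<^sup>+x. ennreal (exp (t * x)) \<partial>\<nu> l)"
    by (intro nn_integral_mono_AE) (auto elim!: AE_mp intro!: ennreal_leI mult_right_mono \<open>s \<le> t\<close>)
  with l show "\<exists>m\<in>L. (\<integral>\<^sup>+x. ennreal (exp (s * x)) \<partial>\<nu> l) \<le> (\<integral>\<^sup>+x. ennreal (exp (t * x)) \<partial>\<nu> m)"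
    by blast
qed

lemma expmom_finite_below:
  assumes sets: "\<And>l. l \<in> L \<Longrightarrow> sets (\<nu> l) = sets borel"
    and pos: "\<And>l. l \<in> L \<Longrightarrow> emeasure (\<nu> l) {..0} = 0"
    and finite: "\<forall>s. 0 \<le> s \<and> s < s0 \<longrightarrow> expmom L \<nu> s < \<infinity>"
    and "0 < s0" "\<delta> < s0"
  shows "expmom L \<nu> \<delta> < \<infinity>"
proof -
  have "expmom L \<nu> \<delta> \<le> expmom L \<nu> (max 0 \<delta>)"
    by (rule expmom_mono[OF sets pos max.cobounded2])
  also have "\<dots> < \<infinity>" using finite assms(4,5) by simp
  finally show ?thesis .
qed

lemma nn_integral_exp_le_Cstar:
  assumes "l \<in> L" and "expmom L \<nu> s < \<infinity>"
  shows "enn2real (\<integral>\<^sup>+x. ennreal (exp (s * x)) \<partial>\<nu> l) \<le> Cstar L \<nu> s"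
  unfolding Cstar_def expmom_def
  using assms by (intro enn2real_mono) (auto simp: expmom_def intro: SUP_upper)

lemma measurable_clamp_ext:
  assumes "G \<in> borel_measurable borel"
  shows "clamp_ext a b G \<in> borel_measurable borel"
proof -
  have "(\<lambda>x. max a (min b x)) \<in> borel_measurable (borel :: real measure)" by measurable
  from measurable_compose[OF this assms] show ?thesis by (simp add: clamp_ext_def[abs_def])
qed

lemma continuous_on_clamp_ext:
  assumes "a \<le> b" and "continuous_on {a..b} F"
  shows "continuous_on UNIV (clamp_ext a b F)"
  unfolding clamp_ext_def
  by (rule continuous_on_compose2[OF assms(2)]) (use assms(1) in \<open>auto intro!: continuous_intros\<close>)

lemma
  fixes M :: "real measure" and w :: "real \<Rightarrow> real"
  assumes sets: "sets M = sets borel" and fin: "(\<integral>\<^sup>+x. ennreal (exp (Re \<eta> * x)) \<partial>M) < \<infinity>"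
    and w: "w \<in> borel_measurable borel" and bound: "\<And>x. \<bar>w x\<bar> \<le> B"
  shows integrable_exp_mult: "integrable M (\<lambda>x. exp (\<eta> * of_real x) * of_real (w x))"
    and norm_integral_exp_mult_le:
      "norm (LINT x|M. exp (\<eta> * of_real x) * of_real (w x))
         \<le> B * enn2real (\<integral>\<^sup>+x. ennreal (exp (Re \<eta> * x)) \<partial>M)"
proof -
  have meas: "\<And>N. M \<rightarrow>\<^sub>M N = borel \<rightarrow>\<^sub>M N" by (rule measurable_cong_sets[OF sets refl])
  have exp_meas: "(\<lambda>x. exp (Re \<eta> * x)) \<in> borel_measurable M" unfolding meas by measurable
  then have exp_int: "integrable M (\<lambda>x. exp (Re \<eta> * x))"
    using fin by (intro integrableI_bounded) simp_all
  have norm_eq: "norm (exp (\<eta> * of_real x) * of_real (w x)) = exp (Re \<eta> * x) * \<bar>w x\<bar>" for x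
    by (simp add: norm_mult norm_exp_eq_Re)
  have le: "norm (exp (\<eta> * of_real x) * of_real (w x)) \<le> B * exp (Re \<eta> * x)" for x
    unfolding norm_eq using bound[of x] by (simp add: mult.commute)
  show int: "integrable M (\<lambda>x. exp (\<eta> * of_real x) * of_real (w x))"
  proof (rule Bochner_Integration.integrable_bound[OF integrable_mult_right[OF exp_int, of B]])
    show "(\<lambda>x. exp (\<eta> * of_real x) * of_real (w x)) \<in> borel_measurable M"
      unfolding meas using w by measurable
    show "AE x in M. norm (exp (\<eta> * of_real x) * of_real (w x)) \<le> norm (B * exp (Re \<eta> * x))"
      unfolding real_norm_def by (intro AE_I2 order_trans[OF le abs_ge_self])
  qed
  have "norm (LINT x|M. exp (\<eta> * of_real x) * of_real (w x)) \<le> (LINT x|M. B * exp (Re \<eta> * x))"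
    using int exp_int le by (intro Bochner_Integration.integral_norm_bound_integral) auto
  also have "\<dots> = B * enn2real (\<integral>\<^sup>+x. ennreal (exp (Re \<eta> * x)) \<partial>M)"
    using exp_meas by (simp add: integral_eq_nn_integral)
  finally show "norm (LINT x|M. exp (\<eta> * of_real x) * of_real (w x))
         \<le> B * enn2real (\<integral>\<^sup>+x. ennreal (exp (Re \<eta> * x)) \<partial>M)" .
qed

lemma norm_Nexp_diff_le:
  fixes F G :: "real \<Rightarrow> real"
  assumes ab: "a \<le> b" and l: "0 \<le> l"
    and prob: "prob_space (\<nu> l)" and sets: "sets (\<nu> l) = sets borel"
    and fin: "(\<integral>\<^sup>+x. ennreal (exp (Re \<eta> * x)) \<partial>\<nu> l) < \<infinity>"
    and F_meas: "clamp_ext a b F \<in> borel_measurable borel"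
    and G_meas: "clamp_ext a b G \<in> borel_measurable borel"
    and F_bound: "\<And>x. x \<in> {a..b} \<Longrightarrow> \<bar>F x\<bar> \<le> B"
    and GF_bound: "\<And>x. x \<in> {a..b} \<Longrightarrow> \<bar>G x - F x\<bar> \<le> S"
  shows "cmod (Nexp a b \<beta> \<eta> \<nu> G l - Nexp a b \<beta> \<eta> \<nu> F l)
           \<le> l * (enn2real (\<integral>\<^sup>+x. ennreal (exp (Re \<eta> * x)) \<partial>\<nu> l) + 1) * S"
proof -
  interpret prob_space "\<nu> l" by (rule prob)
  define u where "u x = clamp_ext a b G (l + \<beta> * x)" for x
  define v where "v x = clamp_ext a b F (l + \<beta> * x)" for x
  let ?e = "\<lambda>x. exp (\<eta> * of_real x)"
  let ?I = "enn2real (\<integral>\<^sup>+x. ennreal (exp (Re \<eta> * x)) \<partial>\<nu> l)"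
  have clamp: "max a (min b y) \<in> {a..b}" for y using ab by simp
  have uv_diff: "\<bar>clamp_ext a b G y - clamp_ext a b F y\<bar> \<le> S" for y
    using GF_bound[OF clamp] by (simp add: clamp_ext_def)
  have v_bound: "\<bar>v x\<bar> \<le> B" for x
    using F_bound[OF clamp] by (simp add: v_def clamp_ext_def)
  have u_bound: "\<bar>u x\<bar> \<le> B + S" for x
    using v_bound[of x] uv_diff[of "l + \<beta> * x"] by (simp add: u_def v_def)
  have affine: "(\<lambda>x. l + \<beta> * x) \<in> borel_measurable (borel :: real measure)" by measurable
  have u_meas: "u \<in> borel_measurable borel" and v_meas: "v \<in> borel_measurable borel"
    using measurable_compose[OF affine G_meas] measurable_compose[OF affine F_meas]
    by (simp_all add: u_def[abs_def] v_def[abs_def] o_def)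
  note integrable = integrable_exp_mult[OF sets fin]
  have "Nexp a b \<beta> \<eta> \<nu> G l - Nexp a b \<beta> \<eta> \<nu> F l
      = of_real l * ((LINT x|\<nu> l. ?e x * of_real (u x)) - (LINT x|\<nu> l. ?e x * of_real (v x))
                     - of_real (clamp_ext a b G l - clamp_ext a b F l))"
    using integrable[OF u_meas u_bound] integrable[OF v_meas v_bound]
    by (simp add: Nexp_def u_def v_def algebra_simps prob_space)
  also have "(LINT x|\<nu> l. ?e x * of_real (u x)) - (LINT x|\<nu> l. ?e x * of_real (v x))
      = (LINT x|\<nu> l. ?e x * of_real (u x - v x))"
    using integrable[OF u_meas u_bound] integrable[OF v_meas v_bound]
    by (simp add: algebra_simps flip: Bochner_Integration.integral_diff)
  finally have diff: "Nexp a b \<beta> \<eta> \<nu> G l - Nexp a b \<beta> \<eta> \<nu> F l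
      = of_real l * ((LINT x|\<nu> l. ?e x * of_real (u x - v x))
                     - of_real (clamp_ext a b G l - clamp_ext a b F l))" .
  have "cmod (Nexp a b \<beta> \<eta> \<nu> G l - Nexp a b \<beta> \<eta> \<nu> F l)
      \<le> l * (norm (LINT x|\<nu> l. ?e x * of_real (u x - v x))
             + \<bar>clamp_ext a b G l - clamp_ext a b F l\<bar>)"
    unfolding diff norm_mult norm_of_real abs_of_nonneg[OF l] using l
    by (intro mult_left_mono order_trans[OF norm_triangle_ineq4]) auto
  also have "\<dots> \<le> l * (S * ?I + S)"
  proof -
    have "(\<lambda>x. u x - v x) \<in> borel_measurable borel" using u_meas v_meas by measurable
    moreover have "\<bar>u x - v x\<bar> \<le> S" for x using uv_diff by (simp add: u_def v_def)
    ultimately have "norm (LINT x|\<nu> l. ?e x * of_real (u x - v x)) \<le> S * ?I"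
      by (rule norm_integral_exp_mult_le[OF sets fin])
    then show ?thesis using uv_diff l by (intro mult_left_mono add_mono) auto
  qed
  finally show ?thesis by (simp add: algebra_simps)
qed

lemma Nexp_diff_le_supnorm:
  fixes F G :: "real \<Rightarrow> real"
  assumes ab: "0 \<le> a" "a \<le> b"
    and kernel: "\<forall>l\<in>{a..b}. prob_space (\<nu> l) \<and> sets (\<nu> l) = sets borel"
    and moment: "expmom {a..b} \<nu> (Re \<eta>) < \<infinity>"
    and F: "continuous_on {a..b} F" and G: "G \<in> borel_measurable borel"
    and bdd: "bdd_above ((\<lambda>x. \<bar>G x - F x\<bar>) ` {a..b})"
    and l: "l \<in> {a..b}"
  shows "cmod (Nexp a b \<beta> \<eta> \<nu> G l - Nexp a b \<beta> \<eta> \<nu> F l)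
           \<le> b * (Cstar {a..b} \<nu> (Re \<eta>) + 1) * supnorm_on {a..b} (\<lambda>x. G x - F x)"
proof -
  let ?S = "supnorm_on {a..b} (\<lambda>x. G x - F x)"
  let ?I = "\<integral>\<^sup>+x. ennreal (exp (Re \<eta> * x)) \<partial>\<nu> l"
  obtain B where "\<And>x. x \<in> {a..b} \<Longrightarrow> \<bar>F x\<bar> \<le> B"
    using continuous_on_compact_bound[OF compact_Icc F] by (metis real_norm_def)
  moreover have S: "\<And>x. x \<in> {a..b} \<Longrightarrow> \<bar>G x - F x\<bar> \<le> ?S"
    using abs_le_supnorm_on[OF bdd] .
  moreover have "?I \<le> expmom {a..b} \<nu> (Re \<eta>)"
    unfolding expmom_def using l by (rule SUP_upper)
  with moment have "?I < \<infinity>" by (simp add: order_le_less_trans)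
  moreover have "clamp_ext a b F \<in> borel_measurable borel"
    using continuous_on_clamp_ext[OF ab(2) F] by (rule borel_measurable_continuous_onI)
  ultimately have "cmod (Nexp a b \<beta> \<eta> \<nu> G l - Nexp a b \<beta> \<eta> \<nu> F l) \<le> l * (enn2real ?I + 1) * ?S"
    using kernel l ab measurable_clamp_ext[OF G] by (intro norm_Nexp_diff_le) auto
  also have "\<dots> \<le> b * (Cstar {a..b} \<nu> (Re \<eta>) + 1) * ?S"
    using S[of a] nn_integral_exp_le_Cstar[OF l moment] l ab
    by (intro mult_right_mono mult_mono) auto
  finally show ?thesis .
qed

context bounded_C2
begin

lemma Nexp_interp_diff_le:
  assumes "0 \<le> a"
    and kernel: "\<forall>l\<in>{a..b}. prob_space (\<nu> l) \<and> sets (\<nu> l) = sets borel"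
    and moment: "expmom {a..b} \<nu> (Re \<eta>) < \<infinity>"
    and grid: "is_grid a b n xs" and p: "p \<in> {1, 2}" and l: "l \<in> {a..b}"
  shows "cmod (Nexp a b \<beta> \<eta> \<nu> (interp p n xs F) l - Nexp a b \<beta> \<eta> \<nu> F l)
           \<le> b * (Cstar {a..b} \<nu> (Re \<eta>) + 1) * supnorm_on {a..b} (\<lambda>x. interp p n xs F x - F x)"
  using assms DERIV_continuous_on[OF F_deriv] interp_measurable[OF grid]
    supnorm_interp_error(1)[OF grid p] grid_node_in_Icc[OF grid, of n]
  by (intro Nexp_diff_le_supnorm) (auto simp: is_grid_def)

lemma Nexp_interp_rate:
  assumes "0 \<le> a"
    and kernel: "\<forall>l\<in>{a..b}. prob_space (\<nu> l) \<and> sets (\<nu> l) = sets borel"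
    and moment: "expmom {a..b} \<nu> (Re \<eta>) < \<infinity>"
    and grid: "is_grid a b n xs" and p: "p \<in> {1, 2}"
  defines "K \<equiv> (2 * M1 + 24 * M2) * (1 + b * (Cstar {a..b} \<nu> (Re \<eta>) + 1))"
  shows "supnorm_on {a..b} (\<lambda>x. interp p n xs F x - F x) \<le> K * maxstep n xs ^ p"
    and "\<forall>l\<in>{a..b}. cmod (Nexp a b \<beta> \<eta> \<nu> (interp p n xs F) l - Nexp a b \<beta> \<eta> \<nu> F l)
                      \<le> K * maxstep n xs ^ p"
proof -
  let ?c = "b * (Cstar {a..b} \<nu> (Re \<eta>) + 1)" and ?r = "(2 * M1 + 24 * M2) * maxstep n xs ^ p"
  let ?err = "supnorm_on {a..b} (\<lambda>x. interp p n xs F x - F x)"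
  have b: "a \<le> b" using grid_node_in_Icc[OF grid, of 0] by simp
  have c: "0 \<le> ?c" using \<open>0 \<le> a\<close> b by (simp add: Cstar_def)
  have rate: "?err \<le> ?r" by (rule supnorm_interp_error(2)[OF grid p])
  have "0 \<le> ?err"
    using abs_le_supnorm_on[OF supnorm_interp_error(1)[OF grid p], of a] b by simp
  with rate c have cr: "0 \<le> ?c * ?r" "?c * ?err \<le> ?c * ?r" "0 \<le> ?r"
    by (simp_all add: mult_left_mono)
  have K: "K * maxstep n xs ^ p = ?r + ?c * ?r" by (simp add: K_def algebra_simps)
  show "?err \<le> K * maxstep n xs ^ p" using rate cr K by linarith
  show "\<forall>l\<in>{a..b}. cmod (Nexp a b \<beta> \<eta> \<nu> (interp p n xs F) l - Nexp a b \<beta> \<eta> \<nu> F l)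
                      \<le> K * maxstep n xs ^ p" (is "\<forall>l\<in>_. ?N l \<le> _")
  proof
    fix l assume "l \<in> {a..b}"
    from Nexp_interp_diff_le[OF assms(1-5) this, where \<beta> = \<beta>] cr K
    show "?N l \<le> K * maxstep n xs ^ p" by linarith
  qed
qed

end

theorem mainTheorem13:
  fixes lmin lmax \<beta> s0 :: real and \<nu> :: "real \<Rightarrow> real measure" and \<eta> :: complex
    and F :: "real \<Rightarrow> real" and p :: nat
  assumes Lam: "0 \<le> lmin" "lmin < lmax"
    and beta: "\<beta> \<ge> 0"
    and kernel_prob: "\<forall>l\<in>{lmin..lmax}. prob_space (\<nu> l) \<and> sets (\<nu> l) = sets borel"
    and kernel_meas: "\<forall>A\<in>sets borel.
           (\<lambda>l. emeasure (\<nu> l) A) \<in> borel_measurable (restrict_space borel {lmin..lmax})"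
    and kernel_supp: "\<forall>l\<in>{lmin..lmax}. emeasure (\<nu> l) {..0} = 0"
    and s0: "s0 > 0"
    and expmom_fin: "\<forall>s. 0 \<le> s \<and> s < s0 \<longrightarrow> expmom {lmin..lmax} \<nu> s < \<infinity>"
    and eta: "Re \<eta> < s0"
    and F: "C2_on {lmin..lmax} F"
    and p: "p \<in> {1, 2}"
  shows "expmom {lmin..lmax} \<nu> (Re \<eta>) < \<infinity>
     \<and> (\<forall>n xs. is_grid lmin lmax n xs \<longrightarrow>
          (\<forall>l\<in>{lmin..lmax}.
             cmod (Nexp lmin lmax \<beta> \<eta> \<nu> (interp p n xs F) l - Nexp lmin lmax \<beta> \<eta> \<nu> F l)
               \<le> lmax * (Cstar {lmin..lmax} \<nu> (Re \<eta>) + 1)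
                   * supnorm_on {lmin..lmax} (\<lambda>x. interp p n xs F x - F x)))
     \<and> (\<exists>K. \<forall>n xs. is_grid lmin lmax n xs \<longrightarrow>
          supnorm_on {lmin..lmax} (\<lambda>x. interp p n xs F x - F x) \<le> K * maxstep n xs ^ p
          \<and> (\<forall>l\<in>{lmin..lmax}.
               cmod (Nexp lmin lmax \<beta> \<eta> \<nu> (interp p n xs F) l - Nexp lmin lmax \<beta> \<eta> \<nu> F l)
                 \<le> K * maxstep n xs ^ p))"
proof -
  obtain F' F'' M1 M2 where "bounded_C2 lmin lmax F F' F'' M1 M2"
    using C2_on_imp_bounded_C2[OF F] .
  then interpret bounded_C2 lmin lmax F F' F'' M1 M2 .
  have moment: "expmom {lmin..lmax} \<nu> (Re \<eta>) < \<infinity>"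
    using kernel_prob kernel_supp expmom_fin s0 eta by (intro expmom_finite_below) auto
  show ?thesis
    using moment Nexp_interp_diff_le[OF Lam(1) kernel_prob moment _ p]
      Nexp_interp_rate[OF Lam(1) kernel_prob moment _ p]
    by blast
qed

end
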